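(* In the scaled CDN routing model described in the context, let $\mathcal{J}_s^c$ be the long-run throughput of the static policy $\pi^s$ in the scaled system with scaling factor $c\ge1$, and let $\mathcal{J}_{ub}^c=\max\sum_{i=1}^m\min\big(\lambda_i^c(0),\mu_i^c\big)$ be the throughput upper bound defined there. Then $$\lim_{c\to\infty}\frac{1}{c}\mathcal{J}_s^c=\lim_{c\to\infty}\frac1c\mathcal{J}_{ub}^c .$$
   Context: A CDN has $m$ surrogate servers $S_1,\dots,S_m$ at fixed points $x_1,\dots,x_m$ of a planar network region $G$ of area $\mathcal{A}$; $|B|$ denotes the area of $B\subseteq G$. In the scaled system with scaling factor $c\ge1$, requests arrive as a Poisson process of total rate $\lambda^c=c\lambda$ with locations i.i.d. uniform on $G$ (so requests from $B\subseteq G$ arrive at rate $c\lambda|B|/\mathcal{A}$); server $S_i$ serves its requests first-come-first-served with exponential service times of rate $\mu_i^c=c\mu_i$ and unlimited queue; $\mathcal{A}$ and a latency bound $\psi>0$ are fixed independent of $c$. The system starts empty. If $n_i(t)$ requests are at $S_i$ at time $t$, let $A_i(t)=\{x\in G:\|x-x_i\|\le \psi-(n_i(t)+1)/(c\mu_i)\}$ (empty if the radius is negative); a request arriving at time $t$ from location $x$ can be served by $S_i$ within latency $\psi$ iff $x\in A_i(t)$. A routing policy sends each arriving request either to some $S_i$ with $x\in A_i(t)$ or to no surrogate server; throughput is the long-run average rate of requests served by surrogate servers. Let $D_i^c=\{x\in G:\|x-x_i\|\le\psi-1/(c\mu_i)\}$ (the region $A_i$ when $S_i$ is empty). An allocation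 is a family of pairwise disjoint measurable sets $R_1,\dots,R_m$ with $R_i\subseteq D_i^c$ (equivalently, a division of each exclusive and common region of the discs $D_i^c$ among the servers whose disc contains it), and $\lambda_i^c(0)=c\lambda|R_i|/\mathcal{A}$. $\mathcal{J}_{ub}^c$ is the maximum of $\sum_{i=1}^m\min(\lambda_i^c(0),\mu_i^c)$ over all allocations. The static policy $\pi^s$ fixes an allocation $R_1^c,\dots,R_m^c$ attaining this maximum; a request arriving at time $t$ from $x\in R_i^c$ is sent to $S_i$ if $x\in A_i(t)$ and otherwise is not served by a surrogate server; requests from outside $\bigcup_i R_i^c$ are not served by a surrogate server. *)

theory Defs
  imports "HOL-Analysis.Analysis"
begin

definition area :: "(real^2) set \<Rightarrow> real" where
  "area B = measure lebesgue B"

text \<open>Region A_i when server S_i holds n requests (scaled system with factor c).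
  A cball-like set with negative radius is empty automatically.\<close>
definition admit_region ::
  "(real^2) set \<Rightarrow> real^2 \<Rightarrow> real \<Rightarrow> real \<Rightarrow> real \<Rightarrow> nat \<Rightarrow> (real^2) set" where
  "admit_region G x psi c mu n = {y \<in> G. norm (y - x) \<le> psi - (real n + 1) / (c * mu)}"

definition disc_D :: "(real^2) set \<Rightarrow> real^2 \<Rightarrow> real \<Rightarrow> real \<Rightarrow> real \<Rightarrow> (real^2) set" where
  "disc_D G x psi c mu = {y \<in> G. norm (y - x) \<le> psi - 1 / (c * mu)}"

definition allocation ::
  "nat \<Rightarrow> (real^2) set \<Rightarrow> (nat \<Rightarrow> real^2) \<Rightarrow> real \<Rightarrow> real \<Rightarrow> (nat \<Rightarrow> real)
     \<Rightarrow> (nat \<Rightarrow> (real^2) set) \<Rightarrow> bool" where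
  "allocation m G xs psi c mu R \<longleftrightarrow>
     (\<forall>i<m. R i \<in> sets lebesgue \<and> R i \<subseteq> disc_D G (xs i) psi c (mu i)) \<and>
     (\<forall>i<m. \<forall>j<m. i \<noteq> j \<longrightarrow> R i \<inter> R j = {})"

definition alloc_value ::
  "nat \<Rightarrow> (real^2) set \<Rightarrow> real \<Rightarrow> real \<Rightarrow> (nat \<Rightarrow> real) \<Rightarrow> (nat \<Rightarrow> (real^2) set) \<Rightarrow> real" where
  "alloc_value m G lam c mu R =
     (\<Sum>i<m. min (c * lam * area (R i) / area G) (c * mu i))"

definition J_ub ::
  "nat \<Rightarrow> (real^2) set \<Rightarrow> (nat \<Rightarrow> real^2) \<Rightarrow> real \<Rightarrow> real \<Rightarrow> (nat \<Rightarrow> real) \<Rightarrow> real \<Rightarrow> real" where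
  "J_ub m G xs lam psi mu c =
     Sup {alloc_value m G lam c mu R | R. allocation m G xs psi c mu R}"

text \<open>Under pi^s, server S_i is a birth-death chain on its queue length n:
  admitted-arrival (birth) rate in state n is c*lam*|R_i \<inter> A_i(n)|/|G|,
  service (death) rate is c*mu_i.\<close>
definition birth_rate ::
  "(real^2) set \<Rightarrow> real \<Rightarrow> real \<Rightarrow> real \<Rightarrow> real^2 \<Rightarrow> real \<Rightarrow> (real^2) set \<Rightarrow> nat \<Rightarrow> real" where
  "birth_rate G lam psi c x mu Ri n = c * lam * area (Ri \<inter> admit_region G x psi c mu n) / area G"

definition bd_generator :: "(nat \<Rightarrow> real) \<Rightarrow> real \<Rightarrow> nat \<Rightarrow> nat \<Rightarrow> real" where
  "bd_generator b d i j =
     (if j = Suc i then b i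
      else if i = Suc j then d
      else if i = j then - (b i + (if i = 0 then 0 else d))
      else 0)"

definition stationary :: "(nat \<Rightarrow> nat \<Rightarrow> real) \<Rightarrow> (nat \<Rightarrow> real) \<Rightarrow> bool" where
  "stationary Q p \<longleftrightarrow> (\<forall>n. 0 \<le> p n) \<and> p sums 1 \<and> (\<forall>j. (\<lambda>i. p i * Q i j) sums 0)"

definition bd_throughput :: "(nat \<Rightarrow> real) \<Rightarrow> real \<Rightarrow> real" where
  "bd_throughput b d =
     (\<Sum>n. (SOME p. stationary (bd_generator b d) p) n * b n)"

definition J_static ::
  "nat \<Rightarrow> (real^2) set \<Rightarrow> (nat \<Rightarrow> real^2) \<Rightarrow> real \<Rightarrow> real \<Rightarrow> (nat \<Rightarrow> real) \<Rightarrow> real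
     \<Rightarrow> (nat \<Rightarrow> (real^2) set) \<Rightarrow> real" where
  "J_static m G xs lam psi mu c R =
     (\<Sum>i<m. bd_throughput (birth_rate G lam psi c (xs i) (mu i) (R i)) (c * mu i))"

end

theory Submission
  imports Defs
begin

text \<open>Under the static policy each server is an independent birth-death chain whose birth rate
  c lam |R_i \<inter> A_i(n)| / |G| vanishes once n exceeds about psi c mu_i. Its throughput is
  c mu_i times the probability that it is busy, hence at most c min(a_i, mu_i) with
  a_i = lam |R_i| / |G|. Conversely, the first sqrt c birth rates lose only an annulus of
  area O(1 / sqrt c) of R_i and so stay above c (a_i - O(1 / sqrt c)); comparing the stationary
  law with a truncated geometric one then bounds the throughput below by
  c min(a_i, mu_i) - O(sqrt c). Hence J_s^c / c and J_ub^c / c differ by O(1 / sqrt c).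
  Finally J_ub^c / c is nondecreasing in c, because the discs D_i^c grow with c, and bounded
  by the sum of the mu_i, so it converges; J_s^c / c converges to the same limit.\<close>

lemma bd_generator_column_0_sums:
  "(\<lambda>i. p i * bd_generator b d i 0) sums (p 1 * d - p 0 * b 0)"
proof -
  have "(\<lambda>i. p i * bd_generator b d i 0) sums (\<Sum>i\<in>{0,1}. p i * bd_generator b d i 0)"
    by (rule sums_finite) (auto simp: bd_generator_def)
  then show ?thesis by (simp add: bd_generator_def)
qed

lemma bd_generator_column_Suc_sums:
  "(\<lambda>i. p i * bd_generator b d i (Suc k)) sums
     (p k * b k - p (Suc k) * (b (Suc k) + d) + p (Suc (Suc k)) * d)"
proof -
  have "(\<lambda>i. p i * bd_generator b d i (Suc k)) sums
          (\<Sum>i\<in>{k, Suc k, Suc (Suc k)}. p i * bd_generator b d i (Suc k))"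
    by (rule sums_finite) (auto simp: bd_generator_def)
  then show ?thesis by (simp add: bd_generator_def algebra_simps)
qed

lemma bd_global_balance_iff_detailed_balance:
  "(\<forall>j. (\<lambda>i. p i * bd_generator b d i j) sums 0) \<longleftrightarrow> (\<forall>n. p (Suc n) * d = p n * b n)"
proof
  assume global: "\<forall>j. (\<lambda>i. p i * bd_generator b d i j) sums 0"
  have col_0: "p 1 * d - p 0 * b 0 = 0"
    using sums_unique2[OF bd_generator_column_0_sums global[rule_format, of 0]] .
  have col_Suc: "p k * b k - p (Suc k) * (b (Suc k) + d) + p (Suc (Suc k)) * d = 0" for k
    using sums_unique2[OF bd_generator_column_Suc_sums global[rule_format, of "Suc k"]] .
  show "\<forall>n. p (Suc n) * d = p n * b n"
  proof
    fix n show "p (Suc n) * d = p n * b n"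
    proof (induction n)
      case 0
      then show ?case using col_0 by simp
    next
      case (Suc n)
      then show ?case using col_Suc[of n] by (simp add: algebra_simps)
    qed
  qed
next
  assume detailed: "\<forall>n. p (Suc n) * d = p n * b n"
  show "\<forall>j. (\<lambda>i. p i * bd_generator b d i j) sums 0"
  proof
    fix j show "(\<lambda>i. p i * bd_generator b d i j) sums 0"
    proof (cases j)
      case 0
      then show ?thesis using bd_generator_column_0_sums[of p b d] detailed by simp
    next
      case (Suc k)
      then show ?thesis
        using bd_generator_column_Suc_sums[of p b d k] detailed[rule_format, of k]
          detailed[rule_format, of "Suc k"]
        by (simp add: algebra_simps)
    qed
  qed
qed

lemma stationary_bd_generator_exists:
  fixes b :: "nat \<Rightarrow> real"
  assumes "d > 0" and "\<And>n. 0 \<le> b n" and "\<And>n. K \<le> n \<Longrightarrow> b n = 0"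
  shows "\<exists>p. stationary (bd_generator b d) p"
proof -
  define w where "w n = (\<Prod>j<n. b j / d)" for n
  define Z where "Z = (\<Sum>n\<le>K. w n)"
  have w_nonneg: "0 \<le> w n" for n
    unfolding w_def using assms by (auto intro!: prod_nonneg)
  have w_vanishes: "w n = 0" if "K < n" for n
    unfolding w_def using that assms(3) by (intro prod_zero) auto
  have Z_ge_1: "1 \<le> Z"
    unfolding Z_def using member_le_sum[of 0 "{..K}" w] w_nonneg by (simp add: w_def)
  define p where "p n = w n / Z" for n
  have "stationary (bd_generator b d) p"
    unfolding stationary_def bd_global_balance_iff_detailed_balance
  proof (intro conjI allI)
    show "0 \<le> p n" for n
      using w_nonneg Z_ge_1 by (simp add: p_def)
    have "p sums (\<Sum>n\<le>K. p n)"
      by (rule sums_finite) (auto simp: p_def w_vanishes)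
    moreover have "(\<Sum>n\<le>K. p n) = 1"
      using Z_ge_1 by (simp add: p_def Z_def sum_divide_distrib[symmetric])
    ultimately show "p sums 1" by simp
    show "p (Suc n) * d = p n * b n" for n
      using \<open>d > 0\<close> by (simp add: p_def w_def field_simps)
  qed
  then show ?thesis by blast
qed

text \<open>Rate in equals rate out: by detailed balance the admission rate equals the death rate
  times the probability that the server is busy.\<close>

lemma stationary_bd_admission_rate:
  assumes "stationary (bd_generator b d) p"
  shows "(\<lambda>n. p n * b n) sums ((1 - p 0) * d)"
proof -
  have detailed: "p (Suc n) * d = p n * b n" for n
    using assms by (simp add: stationary_def bd_global_balance_iff_detailed_balance)
  have "(\<lambda>n. p (Suc n)) sums (1 - p 0)"
    using assms by (simp add: stationary_def sums_Suc_iff)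
  then have "(\<lambda>n. p (Suc n) * d) sums ((1 - p 0) * d)"
    by (rule sums_mult2)
  then show ?thesis by (simp add: detailed)
qed

lemma bd_throughput_eq:
  fixes b :: "nat \<Rightarrow> real"
  assumes "d > 0" and "\<And>n. 0 \<le> b n" and "\<And>n. K \<le> n \<Longrightarrow> b n = 0"
  obtains p where "stationary (bd_generator b d) p" and "bd_throughput b d = (1 - p 0) * d"
proof
  let ?p = "SOME p. stationary (bd_generator b d) p"
  show stat: "stationary (bd_generator b d) ?p"
    using stationary_bd_generator_exists[OF assms] by (rule someI_ex)
  show "bd_throughput b d = (1 - ?p 0) * d"
    unfolding bd_throughput_def using stationary_bd_admission_rate[OF stat] by (simp add: sums_iff)
qed

lemma bd_throughput_le:
  fixes b :: "nat \<Rightarrow> real"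
  assumes "d > 0" and "\<And>n. 0 \<le> b n" and "\<And>n. K \<le> n \<Longrightarrow> b n = 0"
    and "\<And>n. b n \<le> B"
  shows "bd_throughput b d \<le> min d B"
proof -
  obtain p where stat: "stationary (bd_generator b d) p" and T: "bd_throughput b d = (1 - p 0) * d"
    using bd_throughput_eq[OF assms(1-3)] .
  have p_nonneg: "0 \<le> p n" for n
    using stat by (simp add: stationary_def)
  have bound_sums: "(\<lambda>n. p n * B) sums (1 * B)"
    using stat unfolding stationary_def by (intro sums_mult2) simp
  have "(1 - p 0) * d \<le> 1 * B"
    by (rule sums_le[OF _ stationary_bd_admission_rate[OF stat] bound_sums])
      (use assms(4) p_nonneg in \<open>simp add: mult_left_mono\<close>)
  moreover have "(1 - p 0) * d \<le> d"
    using p_nonneg[of 0] \<open>d > 0\<close> by (simp add: algebra_simps)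
  ultimately show ?thesis using T by simp
qed

lemma stationary_bd_ge_geometric:
  assumes stat: "stationary (bd_generator b d) p" and "d > 0" and "0 \<le> r"
    and birth: "\<And>j. j < N \<Longrightarrow> r * d \<le> b j"
  shows "n \<le> N \<Longrightarrow> p 0 * r ^ n \<le> p n"
proof (induction n)
  case 0
  then show ?case by simp
next
  case (Suc n)
  have "p 0 * r ^ Suc n * d = p 0 * r ^ n * (r * d)"
    by (simp add: algebra_simps)
  also have "\<dots> \<le> p n * (r * d)"
    using Suc \<open>0 \<le> r\<close> \<open>d > 0\<close> by (intro mult_right_mono) auto
  also have "\<dots> \<le> p n * b n"
    using birth[of n] Suc.prems stat by (intro mult_left_mono) (auto simp: stationary_def)
  also have "\<dots> = p (Suc n) * d"
    using stat by (simp add: stationary_def bd_global_balance_iff_detailed_balance)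
  finally show ?case using \<open>d > 0\<close> by simp
qed

lemma one_le_geometric_sum_mult:
  fixes r :: real
  assumes "0 \<le> r" and "r \<le> 1"
  shows "1 \<le> (\<Sum>n\<le>N. r ^ n) * (1 - r + 1 / (real N + 1))"
proof -
  let ?S = "\<Sum>n\<le>N. r ^ n"
  have gp: "(1 - r) * ?S = 1 - r ^ Suc N"
    by (rule sum_gp_basic)
  have "(\<Sum>n\<le>N. r ^ Suc N) \<le> ?S"
    by (rule sum_mono) (use assms in \<open>auto intro!: power_decreasing simp del: power_Suc\<close>)
  then have "r ^ Suc N \<le> ?S / (real N + 1)"
    by (simp add: field_simps add.commute)
  then show ?thesis
    using gp by (simp add: algebra_simps)
qed

lemma bd_throughput_ge:
  fixes b :: "nat \<Rightarrow> real"
  assumes "d > 0" and "\<And>n. 0 \<le> b n" and "\<And>n. K \<le> n \<Longrightarrow> b n = 0"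
    and "0 \<le> r" and "r \<le> 1" and "\<And>j. j < N \<Longrightarrow> r * d \<le> b j"
  shows "d * (r - 1 / (real N + 1)) \<le> bd_throughput b d"
proof -
  obtain p where stat: "stationary (bd_generator b d) p" and T: "bd_throughput b d = (1 - p 0) * d"
    using bd_throughput_eq[OF assms(1-3)] .
  define S where "S = (\<Sum>n\<le>N. r ^ n)"
  have S_ge_1: "1 \<le> S"
    unfolding S_def using member_le_sum[of 0 "{..N}" "\<lambda>n. r ^ n"] \<open>0 \<le> r\<close> by simp
  have "p 0 * S \<le> (\<Sum>n\<le>N. p n)"
    unfolding S_def sum_distrib_left
    by (intro sum_mono stationary_bd_ge_geometric[OF stat assms(1,4,6)]) auto
  also have "\<dots> \<le> 1"
    using stat sum_le_suminf[of p "{..N}"] by (auto simp: stationary_def sums_iff)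
  finally have "p 0 \<le> 1 / S"
    using S_ge_1 by (simp add: field_simps)
  also have "\<dots> \<le> 1 - r + 1 / (real N + 1)"
    using one_le_geometric_sum_mult[OF assms(4,5), of N] S_ge_1 by (simp add: S_def field_simps)
  finally show ?thesis
    using T \<open>d > 0\<close> by (simp add: mult_left_mono)
qed

lemma bd_throughput_ge_linear_loss:
  fixes b :: "nat \<Rightarrow> real"
  assumes "d > 0" and "\<And>n. 0 \<le> b n" and "\<And>n. K \<le> n \<Longrightarrow> b n = 0"
    and "0 \<le> k" and birth: "\<And>j. A - k * (real j + 1) \<le> b j"
  shows "min A d - k * real N - d / (real N + 1) \<le> bd_throughput b d"
proof -
  define r where "r = min 1 (max 0 (A - k * real N) / d)"
  have d_r: "d * r = min d (max 0 (A - k * real N))"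
    unfolding r_def using \<open>d > 0\<close> by (simp add: min_mult_distrib_left)
  have "r * d \<le> b j" if "j < N" for j
  proof -
    have "A - k * real N \<le> A - k * (real j + 1)"
      using that \<open>0 \<le> k\<close> by (intro diff_left_mono mult_left_mono) auto
    then show ?thesis
      using d_r birth[of j] assms(2)[of j] by (simp add: mult.commute min_le_iff_disj)
  qed
  then have "d * (r - 1 / (real N + 1)) \<le> bd_throughput b d"
    using assms(1-3) by (intro bd_throughput_ge) (auto simp: r_def)
  moreover have "0 \<le> k * real N"
    using \<open>0 \<le> k\<close> by simp
  ultimately show ?thesis
    using d_r by (simp add: right_diff_distrib)
qed

lemma admit_region_eq:
  "admit_region G x psi c mu n = G \<inter> cball x (psi - (real n + 1) / (c * mu))"
  by (auto simp: admit_region_def dist_norm norm_minus_commute)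

lemma admit_region_sets:
  "G \<in> sets lebesgue \<Longrightarrow> admit_region G x psi c mu n \<in> sets lebesgue"
  unfolding admit_region_eq by auto

lemma admit_region_empty:
  assumes "0 < c * mu" and "psi * (c * mu) < real n + 1"
  shows "admit_region G x psi c mu n = {}"
proof -
  have "psi < (real n + 1) / (c * mu)"
    using assms by (simp add: field_simps)
  then show ?thesis
    unfolding admit_region_eq by auto
qed

lemma measure_annulus_le:
  fixes x :: "real^2"
  assumes "0 \<le> r" and "r \<le> \<rho>"
  shows "measure lebesgue (cball x \<rho> - ball x r) \<le> unit_ball_vol 2 * (2 * \<rho>) * (\<rho> - r)"
proof -
  have "measure lebesgue (cball x \<rho> - ball x r)
          = measure lebesgue (cball x \<rho>) - measure lebesgue (ball x r)"
    using assms emeasure_lborel_cball_finite[of x \<rho>] by (intro measure_Diff) auto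
  also have "\<dots> = unit_ball_vol 2 * (\<rho> - r) * (\<rho> + r)"
    using assms content_cball[of \<rho> x] content_ball[of r x]
    by (simp add: power2_eq_square algebra_simps)
  also have "\<dots> \<le> unit_ball_vol 2 * (\<rho> - r) * (2 * \<rho>)"
    using assms by (intro mult_left_mono) auto
  finally show ?thesis by (simp add: algebra_simps)
qed

text \<open>Requests from R that S_i cannot admit at queue length n lie in an annulus
  of width (n + 1) / (c \<mu>) at the rim of the disc of radius \<psi>.\<close>

lemma area_diff_admit_region_le:
  fixes x :: "real^2"
  assumes "0 < psi" and "0 < c * mu"
    and R_sub: "R \<subseteq> disc_D G x psi c mu" and "R \<in> fmeasurable lebesgue" and "G \<in> sets lebesgue"
  shows "area R - area (R \<inter> admit_region G x psi c mu n)
           \<le> unit_ball_vol 2 * (2 * psi) * ((real n + 1) / (c * mu))"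
proof -
  define \<delta> where "\<delta> = (real n + 1) / (c * mu)"
  define r where "r = max 0 (psi - \<delta>)"
  let ?A = "admit_region G x psi c mu n"
  have \<delta>_pos: "0 < \<delta>"
    unfolding \<delta>_def using assms(2) by simp
  have A_meas: "?A \<in> sets lebesgue"
    using \<open>G \<in> sets lebesgue\<close> by (rule admit_region_sets)
  have "area R - area (R \<inter> ?A) = measure lebesgue (R - R \<inter> ?A)"
    unfolding area_def using assms(4) A_meas by (subst measure_Diff) (auto simp: fmeasurable_def)
  also have "\<dots> \<le> measure lebesgue (cball x psi - ball x r)"
  proof (rule measure_mono_fmeasurable)
    show "R - R \<inter> ?A \<subseteq> cball x psi - ball x r"
    proof
      fix y assume y: "y \<in> R - R \<inter> ?A"
      then have "y \<in> G" and "norm (y - x) \<le> psi - 1 / (c * mu)"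
        using R_sub by (auto simp: disc_D_def)
      moreover have "\<not> norm (y - x) \<le> psi - \<delta>"
        using y \<open>y \<in> G\<close> by (auto simp: admit_region_def \<delta>_def)
      moreover have "0 < 1 / (c * mu)"
        using assms(2) by simp
      ultimately have "norm (y - x) \<le> psi" and "psi - \<delta> < norm (y - x)"
        by linarith+
      then show "y \<in> cball x psi - ball x r"
        by (auto simp: r_def dist_norm norm_minus_commute less_max_iff_disj)
    qed
  qed (use assms(4) A_meas in auto)
  also have "\<dots> \<le> unit_ball_vol 2 * (2 * psi) * (psi - r)"
    using \<delta>_pos \<open>0 < psi\<close> by (intro measure_annulus_le) (auto simp: r_def)
  also have "\<dots> \<le> unit_ball_vol 2 * (2 * psi) * \<delta>"
    using \<open>0 < psi\<close> by (intro mult_left_mono) (auto simp: r_def)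
  finally show ?thesis unfolding \<delta>_def .
qed

lemma birth_rate_nonneg:
  assumes "0 \<le> c" and "0 \<le> lam"
  shows "0 \<le> birth_rate G lam psi c x mu R n"
  unfolding birth_rate_def area_def using assms by simp

lemma birth_rate_vanishes:
  assumes "0 < c * mu" and "nat \<lceil>psi * (c * mu)\<rceil> \<le> n"
  shows "birth_rate G lam psi c x mu R n = 0"
proof -
  have "psi * (c * mu) < real n + 1"
    using assms(2) by linarith
  then show ?thesis
    unfolding birth_rate_def using admit_region_empty[OF assms(1)] by (simp add: area_def)
qed

lemma birth_rate_le:
  assumes "0 \<le> c" and "0 \<le> lam" and "R \<in> fmeasurable lebesgue" and "G \<in> sets lebesgue"
  shows "birth_rate G lam psi c x mu R n \<le> c * lam * area R / area G"
proof -
  have "area (R \<inter> admit_region G x psi c mu n) \<le> area R"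
    unfolding area_def using assms(3) admit_region_sets[OF assms(4)]
    by (intro measure_mono_fmeasurable) (auto intro: fmeasurableD)
  then show ?thesis
    unfolding birth_rate_def using assms(1,2)
    by (intro divide_right_mono mult_left_mono) (auto simp: area_def)
qed

lemma birth_rate_ge:
  fixes x :: "real^2"
  assumes "0 < c" and "0 < mu" and "0 < psi" and "0 \<le> lam" and "0 < area G"
    and "R \<subseteq> disc_D G x psi c mu" and "R \<in> fmeasurable lebesgue" and "G \<in> sets lebesgue"
  shows "c * lam * area R / area G - lam * unit_ball_vol 2 * (2 * psi) / (mu * area G) * (real n + 1)
           \<le> birth_rate G lam psi c x mu R n"
proof -
  have "area R - unit_ball_vol 2 * (2 * psi) * ((real n + 1) / (c * mu))
          \<le> area (R \<inter> admit_region G x psi c mu n)"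
    using area_diff_admit_region_le[of psi c mu R G x n] assms by simp
  then have "c * lam * (area R - unit_ball_vol 2 * (2 * psi) * ((real n + 1) / (c * mu))) / area G
               \<le> birth_rate G lam psi c x mu R n"
    unfolding birth_rate_def using assms(1,4,5)
    by (intro divide_right_mono mult_left_mono) auto
  moreover have "c * lam * (area R - unit_ball_vol 2 * (2 * psi) * ((real n + 1) / (c * mu))) / area G
      = c * lam * area R / area G - lam * unit_ball_vol 2 * (2 * psi) / (mu * area G) * (real n + 1)"
    using assms(1,2,5) by (simp add: field_simps)
  ultimately show ?thesis by simp
qed

lemma fmeasurable_if_area_pos:
  assumes "G \<in> sets lebesgue" and "0 < area G"
  shows "G \<in> fmeasurable lebesgue"
  using assms by (intro fmeasurableI) (auto simp: area_def measure_def enn2real_positive_iff)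

definition server_throughput ::
  "(real^2) set \<Rightarrow> real \<Rightarrow> real \<Rightarrow> real \<Rightarrow> real^2 \<Rightarrow> real \<Rightarrow> (real^2) set \<Rightarrow> real" where
  "server_throughput G lam psi c x mu R = bd_throughput (birth_rate G lam psi c x mu R) (c * mu)"

lemma server_throughput_le:
  assumes "0 < c" and "0 < mu" and "0 \<le> lam" and "R \<in> fmeasurable lebesgue" and "G \<in> sets lebesgue"
  shows "server_throughput G lam psi c x mu R \<le> c * min (lam * area R / area G) mu"
proof -
  have "server_throughput G lam psi c x mu R \<le> min (c * mu) (c * lam * area R / area G)"
    unfolding server_throughput_def
    by (rule bd_throughput_le[where K = "nat \<lceil>psi * (c * mu)\<rceil>"])
      (use assms in \<open>auto intro: birth_rate_nonneg birth_rate_vanishes birth_rate_le\<close>)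
  then show ?thesis
    using \<open>0 < c\<close> by (simp add: min_mult_distrib_left min.commute mult.assoc)
qed

text \<open>Choosing N = \<lfloor>\<surd>c\<rfloor> balances the two losses in bd_throughput_ge_linear_loss,
  which are O(N) and O(c / N).\<close>

lemma server_throughput_ge:
  fixes x :: "real^2"
  assumes "1 \<le> c" and "0 < mu" and "0 < psi" and "0 \<le> lam" and "0 < area G"
    and "R \<subseteq> disc_D G x psi c mu" and "R \<in> fmeasurable lebesgue" and "G \<in> sets lebesgue"
  shows "c * min (lam * area R / area G) mu
           - (lam * unit_ball_vol 2 * (2 * psi) / (mu * area G) + mu) * sqrt c
         \<le> server_throughput G lam psi c x mu R"
proof -
  define a where "a = lam * area R / area G"
  define k where "k = lam * unit_ball_vol 2 * (2 * psi) / (mu * area G)"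
  define N where "N = nat \<lfloor>sqrt c\<rfloor>"
  have "0 < c" and "0 < c * mu"
    using assms(1,2) by simp_all
  have k_nonneg: "0 \<le> k"
    unfolding k_def using assms(2-5) by simp
  have N: "real N \<le> sqrt c" "sqrt c \<le> real N + 1" "1 \<le> sqrt c"
    unfolding N_def using assms(1) by simp_all
  have "min (c * a) (c * mu) - k * real N - c * mu / (real N + 1)
          \<le> server_throughput G lam psi c x mu R"
    unfolding server_throughput_def
  proof (rule bd_throughput_ge_linear_loss[where K = "nat \<lceil>psi * (c * mu)\<rceil>"])
    show "c * a - k * (real j + 1) \<le> birth_rate G lam psi c x mu R j" for j
      unfolding a_def k_def using birth_rate_ge[OF \<open>0 < c\<close> assms(2-8), of j]
      by (simp only: times_divide_eq_right mult.assoc)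
  qed (use assms \<open>0 < c\<close> k_nonneg in \<open>auto intro: birth_rate_nonneg birth_rate_vanishes\<close>)
  moreover have "k * real N \<le> k * sqrt c"
    using N k_nonneg by (intro mult_left_mono) auto
  moreover have "c * mu / (real N + 1) \<le> mu * sqrt c"
  proof -
    have "c * mu / (real N + 1) \<le> c * mu / sqrt c"
      using N \<open>0 < c * mu\<close> by (intro divide_left_mono) auto
    also have "\<dots> = mu * sqrt c"
      using N(3) real_sqrt_mult_self[of c] \<open>0 < c\<close> by (simp add: field_simps)
    finally show ?thesis .
  qed
  moreover have "c * min a mu = min (c * a) (c * mu)"
    using \<open>0 < c\<close> by (simp add: min_mult_distrib_left)
  ultimately show ?thesis
    unfolding a_def[symmetric] k_def[symmetric] by (simp add: algebra_simps)
qed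

lemma J_static_div_bounds:
  fixes xs :: "nat \<Rightarrow> real^2"
  assumes "1 \<le> c" and "0 < psi" and "0 \<le> lam" and mu: "\<forall>i<m. 0 < mu i"
    and G: "G \<in> sets lebesgue" "0 < area G" and alloc: "allocation m G xs psi c mu R"
  shows "alloc_value m G lam c mu R / c
           - (\<Sum>i<m. lam * unit_ball_vol 2 * (2 * psi) / (mu i * area G) + mu i) / sqrt c
         \<le> J_static m G xs lam psi mu c R / c"
    and "J_static m G xs lam psi mu c R / c \<le> alloc_value m G lam c mu R / c"
proof -
  define E where "E = (\<Sum>i<m. lam * unit_ball_vol 2 * (2 * psi) / (mu i * area G) + mu i)"
  have R_disc: "R i \<subseteq> disc_D G (xs i) psi c (mu i)" if "i < m" for i
    using alloc that by (simp add: allocation_def)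
  have R_fmeas: "R i \<in> fmeasurable lebesgue" if "i < m" for i
  proof (rule fmeasurableI2[OF fmeasurable_if_area_pos[OF G]])
    show "R i \<subseteq> G" using R_disc[OF that] by (auto simp: disc_D_def)
    show "R i \<in> sets lebesgue" using alloc that by (simp add: allocation_def)
  qed
  have J_static_eq:
    "J_static m G xs lam psi mu c R = (\<Sum>i<m. server_throughput G lam psi c (xs i) (mu i) (R i))"
    by (simp add: J_static_def server_throughput_def)
  have value_eq: "alloc_value m G lam c mu R = (\<Sum>i<m. c * min (lam * area (R i) / area G) (mu i))"
    unfolding alloc_value_def using \<open>1 \<le> c\<close> by (intro sum.cong) (auto simp: min_mult_distrib_left)
  have lower: "alloc_value m G lam c mu R - E * sqrt c \<le> J_static m G xs lam psi mu c R"
    unfolding J_static_eq value_eq E_def sum_distrib_right sum_subtractf[symmetric]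
    using assms R_disc R_fmeas by (intro sum_mono server_throughput_ge) auto
  have upper: "J_static m G xs lam psi mu c R \<le> alloc_value m G lam c mu R"
    unfolding J_static_eq value_eq
    using assms R_fmeas by (intro sum_mono server_throughput_le) auto
  have "alloc_value m G lam c mu R / c - E / sqrt c = (alloc_value m G lam c mu R - E * sqrt c) / c"
    using \<open>1 \<le> c\<close> real_sqrt_mult_self[of c] by (simp add: field_simps)
  then show "alloc_value m G lam c mu R / c - E / sqrt c \<le> J_static m G xs lam psi mu c R / c"
    using lower \<open>1 \<le> c\<close> by (simp add: divide_right_mono)
  show "J_static m G xs lam psi mu c R / c \<le> alloc_value m G lam c mu R / c"
    using upper \<open>1 \<le> c\<close> by (simp add: divide_right_mono)
qed

lemma mono_on_tendsto_at_top_Sup: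
  fixes f :: "'a::linorder \<Rightarrow> 'b::{conditionally_complete_linorder,linorder_topology}"
  assumes mono: "mono_on {a..} f" and bdd: "bdd_above (f ` {a..})"
  shows "(f \<longlongrightarrow> (SUP x\<in>{a..}. f x)) at_top"
proof (rule increasing_tendsto)
  show "\<forall>\<^sub>F x in at_top. f x \<le> (SUP x\<in>{a..}. f x)"
    using eventually_ge_at_top[of a] by eventually_elim (use bdd in \<open>auto intro: cSUP_upper\<close>)
next
  fix y assume "y < (SUP x\<in>{a..}. f x)"
  then obtain x0 where "a \<le> x0" and "y < f x0"
    using less_cSUP_iff[OF _ bdd] by auto
  show "\<forall>\<^sub>F x in at_top. y < f x"
    using eventually_ge_at_top[of x0]
  proof eventually_elim
    case (elim x)
    then have "f x0 \<le> f x"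
      using mono \<open>a \<le> x0\<close> by (auto intro: mono_onD)
    then show ?case using \<open>y < f x0\<close> by simp
  qed
qed

lemma alloc_value_scale:
  "0 \<le> c \<Longrightarrow> alloc_value m G lam c mu R = c * alloc_value m G lam 1 mu R"
  unfolding alloc_value_def sum_distrib_left
  by (intro sum.cong) (auto simp: min_mult_distrib_left mult.assoc)

lemma alloc_value_le: "alloc_value m G lam c mu R \<le> c * (\<Sum>i<m. mu i)"
  unfolding alloc_value_def sum_distrib_left by (intro sum_mono) simp

lemma alloc_value_le_J_ub:
  assumes "allocation m G xs psi c mu R"
  shows "alloc_value m G lam c mu R \<le> J_ub m G xs lam psi mu c"
  unfolding J_ub_def
proof (rule cSup_upper)
  show "alloc_value m G lam c mu R \<in> {alloc_value m G lam c mu R | R. allocation m G xs psi c mu R}"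
    using assms by blast
  show "bdd_above {alloc_value m G lam c mu R | R. allocation m G xs psi c mu R}"
    using alloc_value_le by (intro bdd_aboveI) blast
qed

lemma disc_D_mono:
  assumes "0 < c" and "c \<le> c'" and "0 < mu"
  shows "disc_D G x psi c mu \<subseteq> disc_D G x psi c' mu"
proof -
  have "1 / (c' * mu) \<le> 1 / (c * mu)"
    using assms by (intro divide_left_mono mult_right_mono mult_pos_pos) auto
  then show ?thesis
    unfolding disc_D_def by auto
qed

lemma allocation_mono:
  assumes "allocation m G xs psi c mu R" and "0 < c" and "c \<le> c'" and "\<forall>i<m. 0 < mu i"
  shows "allocation m G xs psi c' mu R"
  using assms disc_D_mono[OF assms(2,3)] unfolding allocation_def by blast

text \<open>An allocation optimal for c remains admissible for every c' \<ge> c, and the normalised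
  value of a fixed allocation does not depend on the scaling factor.\<close>

lemma J_ub_div_mono_on:
  assumes mu: "\<forall>i<m. 0 < mu i"
    and opt: "\<forall>c\<ge>1. allocation m G xs psi c mu (R c) \<and>
                     alloc_value m G lam c mu (R c) = J_ub m G xs lam psi mu c"
  shows "mono_on {1..} (\<lambda>c. J_ub m G xs lam psi mu c / c)"
proof (rule mono_onI)
  fix c c' :: real assume "c \<in> {1..}" "c' \<in> {1..}" "c \<le> c'"
  then have "1 \<le> c" "c \<le> c'" by auto
  have "J_ub m G xs lam psi mu c / c = alloc_value m G lam 1 mu (R c)"
    using opt \<open>1 \<le> c\<close> alloc_value_scale[of c m G lam mu "R c"] by simp
  also have "\<dots> = alloc_value m G lam c' mu (R c) / c'"
    using \<open>1 \<le> c\<close> \<open>c \<le> c'\<close> alloc_value_scale[of c' m G lam mu "R c"] by simp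
  also have "\<dots> \<le> J_ub m G xs lam psi mu c' / c'"
    using opt \<open>1 \<le> c\<close> \<open>c \<le> c'\<close> allocation_mono[OF _ _ \<open>c \<le> c'\<close> mu]
    by (intro divide_right_mono alloc_value_le_J_ub) auto
  finally show "J_ub m G xs lam psi mu c / c \<le> J_ub m G xs lam psi mu c' / c'" .
qed

lemma J_ub_div_tendsto:
  assumes mu: "\<forall>i<m. 0 < mu i"
    and opt: "\<forall>c\<ge>1. allocation m G xs psi c mu (R c) \<and>
                     alloc_value m G lam c mu (R c) = J_ub m G xs lam psi mu c"
  shows "((\<lambda>c. J_ub m G xs lam psi mu c / c)
            \<longlongrightarrow> (SUP c\<in>{1..}. J_ub m G xs lam psi mu c / c)) at_top"
proof (rule mono_on_tendsto_at_top_Sup)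
  show "mono_on {1..} (\<lambda>c. J_ub m G xs lam psi mu c / c)"
    using assms by (rule J_ub_div_mono_on)
  have "J_ub m G xs lam psi mu c / c \<le> (\<Sum>i<m. mu i)" if "1 \<le> c" for c
    using opt alloc_value_le[of m G lam c mu "R c"] that by (simp add: pos_divide_le_eq mult.commute)
  then show "bdd_above ((\<lambda>c. J_ub m G xs lam psi mu c / c) ` {1..})"
    by (intro bdd_aboveI) auto
qed

theorem theorem4:
  fixes m :: nat and G :: "(real^2) set" and xs :: "nat \<Rightarrow> real^2"
    and lam psi :: real and mu :: "nat \<Rightarrow> real"
    and R :: "real \<Rightarrow> nat \<Rightarrow> (real^2) set"
  assumes "m \<ge> 1"
    and "G \<in> sets lebesgue" and "0 < area G"
    and "\<forall>i<m. xs i \<in> G"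
    and "lam > 0" and "psi > 0" and "\<forall>i<m. mu i > 0"
    and "\<forall>c\<ge>1. allocation m G xs psi c mu (R c) \<and>
                 alloc_value m G lam c mu (R c) = J_ub m G xs lam psi mu c"
  shows "\<exists>L. ((\<lambda>c. J_static m G xs lam psi mu c (R c) / c) \<longlongrightarrow> L) at_top \<and>
             ((\<lambda>c. J_ub m G xs lam psi mu c / c) \<longlongrightarrow> L) at_top"
proof -
  define E where "E = (\<Sum>i<m. lam * unit_ball_vol 2 * (2 * psi) / (mu i * area G) + mu i)"
  define L where "L = (SUP c\<in>{1..}. J_ub m G xs lam psi mu c / c)"
  have ub_lim: "((\<lambda>c. J_ub m G xs lam psi mu c / c) \<longlongrightarrow> L) at_top"
    unfolding L_def using assms(7,8) by (rule J_ub_div_tendsto)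
  have "((\<lambda>c. E / sqrt c) \<longlongrightarrow> 0) at_top"
    by (intro tendsto_divide_0[OF tendsto_const] filterlim_at_top_imp_at_infinity sqrt_at_top)
  then have lower_lim: "((\<lambda>c. J_ub m G xs lam psi mu c / c - E / sqrt c) \<longlongrightarrow> L) at_top"
    using tendsto_diff[OF ub_lim] by fastforce
  have "\<forall>\<^sub>F c in at_top.
          J_ub m G xs lam psi mu c / c - E / sqrt c \<le> J_static m G xs lam psi mu c (R c) / c \<and>
          J_static m G xs lam psi mu c (R c) / c \<le> J_ub m G xs lam psi mu c / c"
    using eventually_ge_at_top[of 1]
  proof eventually_elim
    case (elim c)
    then show ?case
      using J_static_div_bounds[OF elim assms(6) _ assms(7,2,3), of lam xs "R c"] assms(5,8)
      by (simp add: E_def)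
  qed
  then have "((\<lambda>c. J_static m G xs lam psi mu c (R c) / c) \<longlongrightarrow> L) at_top"
    unfolding eventually_conj_iff by (blast intro: tendsto_sandwich[OF _ _ lower_lim ub_lim])
  then show ?thesis
    using ub_lim by blast
qed

end
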